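(* Let $k\ge1$ and let $\mu_k$ be an LTI probability measure on $X_k=\{0,1\}^{\{0,\ldots,k\}}$. Suppose there is a bijection $\phi:X_k\to X_k$ with $\mu_k(\phi(\eta))=\mu_k(\eta)$ for all $\eta$ and $\phi(\{0\xi,1\xi\})=\{\xi0,\xi1\}$ for every binary string $\xi$ of length $k$. Then $\mu_k$ has a translation invariant extension $\mu$ to $\{0,1\}^{\mathbb{Z}}$ with total entropy $S(\mu)=S(\mu_k)$; consequently $\mu$ has minimal total entropy among all translation invariant extensions of $\mu_k$. Explicitly, if $P_1,\ldots,P_n$ are the orbits of $\phi$, each viewed as a closed path in the de Bruijn graph $G_k$ with edges $\eta,\phi(\eta),\phi^2(\eta),\ldots$, and $w_i$ is the common value of $\mu_k$ on the edges of $P_i$, then $\mu=\sum_{i=1}^n w_i|P_i|\,\nu_{P_i}$.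
   Context: Total entropy $S(\mu)=\lim_{j\to\infty}S(\pi_j\mu)$, with $\pi_j\mu$ the marginal on coordinates $0,\ldots,j$ and $S$ the Gibbs–Shannon entropy. De Bruijn graph $G_k$: vertices binary strings of length $k$, edges binary strings of length $k+1$, edge $a\theta b$ from $a\theta$ to $\theta b$. For a closed path $P$ with edges $\eta^{(1)},\ldots,\eta^{(p)}$ that is not a repetition of a shorter closed path, $\nu_P$ gives mass $1/p$ to each of the $p$ translates of the periodic configuration obtained by traversing $P$ repeatedly and recording the first symbol of each edge. LTI: for $A,A'\subset\{0,\ldots,k\}$ with $A'$ a translate of $A$, the marginals on $A'$ and $A$ agree up to translation. *)

theory Defs
  imports "HOL-Probability.Probability"
begin

text \<open>Configurations on the integers: \<open>int \<Rightarrow> bool\<close> (False = 0, True = 1),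
  with the product sigma-algebra.\<close>
definition Mz :: "(int \<Rightarrow> bool) measure" where
  "Mz = (\<Pi>\<^sub>M i\<in>(UNIV::int set). count_space (UNIV::bool set))"

text \<open>Binary strings of length n (vertices / edges of de Bruijn graphs, elements of X_k).\<close>
definition bin_strings :: "nat \<Rightarrow> bool list set" where
  "bin_strings n = {xs. length xs = n}"

definition gs_entropy :: "('a \<Rightarrow> real) \<Rightarrow> 'a set \<Rightarrow> real" where
  "gs_entropy p A = - (\<Sum>a\<in>A. p a * ln (p a))"

definition marginal_prob :: "(int \<Rightarrow> bool) measure \<Rightarrow> nat \<Rightarrow> bool list \<Rightarrow> real" where
  "marginal_prob \<mu> j xs = measure \<mu> {x \<in> space \<mu>. map x [0..int j] = xs}"

definition total_entropy :: "(int \<Rightarrow> bool) measure \<Rightarrow> ereal" where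
  "total_entropy \<mu> = lim (\<lambda>j. ereal (gs_entropy (marginal_prob \<mu> j) (bin_strings (Suc j))))"

definition ti_measure :: "(int \<Rightarrow> bool) measure \<Rightarrow> bool" where
  "ti_measure \<mu> \<longleftrightarrow> prob_space \<mu> \<and> sets \<mu> = sets Mz \<and>
     distr \<mu> Mz (\<lambda>x i. x (i + 1)) = \<mu>"

definition extends :: "(int \<Rightarrow> bool) measure \<Rightarrow> nat \<Rightarrow> bool list pmf \<Rightarrow> bool" where
  "extends \<mu> k \<mu>k \<longleftrightarrow> (\<forall>xs\<in>bin_strings (Suc k). marginal_prob \<mu> k xs = pmf \<mu>k xs)"

definition LTI :: "nat \<Rightarrow> bool list pmf \<Rightarrow> bool" where
  "LTI k \<mu>k \<longleftrightarrow> (\<forall>A t. A \<subseteq> {0..k} \<and> (\<lambda>i. i + t) ` A \<subseteq> {0..k} \<longrightarrow>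
      map_pmf (\<lambda>\<eta>. restrict (\<lambda>i. \<eta> ! (i + t)) A) \<mu>k =
      map_pmf (\<lambda>\<eta>. restrict (\<lambda>i. \<eta> ! i) A) \<mu>k)"

text \<open>Periodic configuration of a closed path P (list of edges): traverse P repeatedly,
  recording the first symbol of each edge.\<close>
definition cyc_config :: "bool list list \<Rightarrow> int \<Rightarrow> bool" where
  "cyc_config P i = hd (P ! nat (i mod int (length P)))"

definition nu_path :: "bool list list \<Rightarrow> (int \<Rightarrow> bool) pmf" where
  "nu_path P = map_pmf (\<lambda>s i. cyc_config P (i + int s)) (pmf_of_set {..<length P})"

definition orbit_of :: "('a \<Rightarrow> 'a) \<Rightarrow> 'a \<Rightarrow> 'a set" where
  "orbit_of \<phi> \<eta> = {(\<phi> ^^ n) \<eta> | n. True}"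

definition orbit_path :: "('a \<Rightarrow> 'a) \<Rightarrow> 'a \<Rightarrow> 'a list" where
  "orbit_path \<phi> \<eta> = map (\<lambda>n. (\<phi> ^^ n) \<eta>) [0..<card (orbit_of \<phi> \<eta>)]"

end

theory Submission
  imports Defs "HOL-Combinatorics.Orbits"
begin

(*
  Every edge \<eta> of the de Bruijn graph G_k lies on a \<phi>-cycle \<eta>, \<phi> \<eta>, \<phi>^2 \<eta>, ...; since \<phi> sends
  the edge a\<xi> to an edge \<xi>b leaving the endpoint of a\<xi>, this cycle is a closed path, and the
  periodic configuration it spells out reads \<eta> on the coordinates 0..k.  Let \<mu> be the push-forward
  of \<mu>_k under \<eta> \<mapsto> (that configuration).  Its shift is the push-forward under
  \<eta> \<mapsto> (configuration of \<phi> \<eta>), so \<phi>-invariance of \<mu>_k makes \<mu> translation invariant.  For j \<ge> k the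
  window on 0..j still determines \<eta>, so every marginal of \<mu> beyond k has the entropy of \<mu>_k,
  while the marginal entropies of any measure are nondecreasing in j; hence S(\<mu>) = S(\<mu>_k) is
  minimal.  Grouping the edges by \<phi>-orbits gives the decomposition into the measures \<nu>_P.
*)

lemma space_Mz [simp]: "space Mz = UNIV"
  by (simp add: Mz_def space_PiM)

lemma finite_bin_strings [simp]: "finite (bin_strings n)"
  by (simp add: bin_strings_def finite_list_length)

lemma upto_0_int_eq_map_upt: "[0..int j] = map int [0..<Suc j]"
  by (induction j) (simp_all add: upto_rec2)

lemma map_upto_Suc: "map x [0..int (Suc j)] = map x [0..int j] @ [x (int (Suc j))]"
  by (simp only: upto_0_int_eq_map_upt) simp

lemma sets_Mz_map_eq: "{x. map x L = xs} \<in> sets Mz"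
proof (induction L arbitrary: xs)
  case Nil
  show ?case by (cases xs) (auto simp flip: space_Mz)
next
  case (Cons a L)
  have coord: "(\<lambda>x. x a) \<in> Mz \<rightarrow>\<^sub>M count_space UNIV"
    unfolding Mz_def by (rule measurable_component_singleton) simp
  show ?case
  proof (cases xs)
    case (Cons y ys)
    have "{x. map x (a # L) = xs} = ((\<lambda>x. x a) -` {y} \<inter> space Mz) \<inter> {x. map x L = ys}"
      using Cons by auto
    then show ?thesis using measurable_sets[OF coord] Cons.IH by auto
  qed simp
qed

lemma shift_measurable: "(\<lambda>x i. x (i + 1)) \<in> Mz \<rightarrow>\<^sub>M Mz"
  unfolding Mz_def
  by (rule measurable_PiM_single') (auto intro: measurable_component_singleton)

lemma mult_ln_superadditive:
  fixes a c :: real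
  assumes "0 \<le> a" "0 \<le> c"
  shows "a * ln a + c * ln c \<le> (a + c) * ln (a + c)"
proof -
  have "x * ln x \<le> x * ln (a + c)" if "0 \<le> x" "x \<le> a + c" for x :: real
    using that by (cases "x = 0") (auto intro: mult_left_mono)
  from this[of a] this[of c] show ?thesis
    using assms by (simp add: distrib_right)
qed

lemma sum_bin_strings_Suc:
  "(\<Sum>ys\<in>bin_strings (Suc n). g ys) = (\<Sum>xs\<in>bin_strings n. g (xs @ [False]) + g (xs @ [True]))"
proof -
  have "bin_strings (Suc n) = (\<lambda>(xs, b). xs @ [b]) ` (bin_strings n \<times> UNIV)"
  proof (intro set_eqI iffI)
    fix ys assume ys: "ys \<in> bin_strings (Suc n)"
    then have "ys = butlast ys @ [last ys]"
      by (intro append_butlast_last_id[symmetric]) (auto simp: bin_strings_def)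
    moreover have "butlast ys \<in> bin_strings n"
      using ys by (simp add: bin_strings_def)
    ultimately show "ys \<in> (\<lambda>(xs, b). xs @ [b]) ` (bin_strings n \<times> UNIV)"
      by (intro image_eqI[of _ _ "(butlast ys, last ys)"]) auto
  qed (auto simp: bin_strings_def)
  moreover have "inj_on (\<lambda>(xs, b). xs @ [b]) (bin_strings n \<times> (UNIV :: bool set))"
    by (auto simp: inj_on_def)
  ultimately have "sum g (bin_strings (Suc n)) = (\<Sum>(xs, b)\<in>bin_strings n \<times> UNIV. g (xs @ [b]))"
    by (simp add: sum.reindex case_prod_unfold)
  also have "\<dots> = (\<Sum>xs\<in>bin_strings n. \<Sum>b\<in>UNIV. g (xs @ [b]))"
    by (rule sum.cartesian_product[symmetric])
  finally show ?thesis
    by (simp add: UNIV_bool)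
qed

lemma marginal_prob_Suc:
  assumes "prob_space \<mu>" "sets \<mu> = sets Mz"
  shows "marginal_prob \<mu> j xs =
    marginal_prob \<mu> (Suc j) (xs @ [False]) + marginal_prob \<mu> (Suc j) (xs @ [True])"
proof -
  interpret prob_space \<mu> by fact
  have space: "space \<mu> = UNIV" using sets_eq_imp_space_eq[OF assms(2)] by simp
  define A where "A b = {x. map x [0..int (Suc j)] = xs @ [b]}" for b
  have "{x. map x [0..int j] = xs} = A False \<union> A True"
    unfolding A_def map_upto_Suc by auto
  moreover have "A b \<in> sets \<mu>" for b
    unfolding A_def assms(2) by (rule sets_Mz_map_eq)
  ultimately show ?thesis
    by (simp add: marginal_prob_def space A_def[symmetric] finite_measure_Union disjoint_iff A_def)
qed

lemma gs_entropy_marginal_le_Suc: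
  assumes "prob_space \<mu>" "sets \<mu> = sets Mz"
  shows "gs_entropy (marginal_prob \<mu> j) (bin_strings (Suc j))
    \<le> gs_entropy (marginal_prob \<mu> (Suc j)) (bin_strings (Suc (Suc j)))"
proof -
  let ?p = "marginal_prob \<mu> (Suc j)"
  have "marginal_prob \<mu> j xs * ln (marginal_prob \<mu> j xs)
      \<ge> ?p (xs @ [False]) * ln (?p (xs @ [False])) + ?p (xs @ [True]) * ln (?p (xs @ [True]))" for xs
    unfolding marginal_prob_Suc[OF assms, of j xs]
    by (rule mult_ln_superadditive) (simp_all add: marginal_prob_def)
  then show ?thesis
    unfolding gs_entropy_def sum_bin_strings_Suc[of _ "Suc j"] neg_le_iff_le
    by (intro sum_mono) simp
qed

lemma gs_entropy_marginal_le_total_entropy: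
  assumes "prob_space \<mu>" "sets \<mu> = sets Mz"
  shows "ereal (gs_entropy (marginal_prob \<mu> j) (bin_strings (Suc j))) \<le> total_entropy \<mu>"
proof -
  let ?H = "\<lambda>j. ereal (gs_entropy (marginal_prob \<mu> j) (bin_strings (Suc j)))"
  have "incseq ?H"
    by (rule incseq_SucI) (simp add: gs_entropy_marginal_le_Suc[OF assms])
  then have "total_entropy \<mu> = (SUP j. ?H j)"
    unfolding total_entropy_def by (rule limI[OF LIMSEQ_SUP])
  then show ?thesis by (metis SUP_upper UNIV_I)
qed

lemma cyc_config_nat:
  assumes "P \<noteq> []"
  shows "cyc_config P (int n) = hd (P ! (n mod length P))"
  by (simp add: cyc_config_def nat_mod_as_int)

lemma cyc_config_rotate:
  assumes "P \<noteq> []"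
  shows "cyc_config (rotate s P) i = cyc_config P (i + int s)"
proof -
  let ?p = "length P"
  have p: "0 < ?p" using assms by simp
  have "nat ((i + int s) mod int ?p) = nat ((i mod int ?p + int s) mod int ?p)"
    by (simp add: mod_add_left_eq)
  also have "\<dots> = (s + nat (i mod int ?p)) mod ?p"
    using p by (simp add: nat_mod_distrib nat_add_distrib add.commute)
  moreover have "nat (i mod int ?p) < ?p"
    using p by (simp add: nat_less_iff)
  ultimately show ?thesis
    by (simp add: cyc_config_def nth_rotate)
qed

lemma prob_nu_path:
  assumes "P \<noteq> []"
  shows "measure_pmf.prob (nu_path P) A =
    card {s \<in> {..<length P}. cyc_config (rotate s P) \<in> A} / length P"
proof -
  have "nu_path P = map_pmf (\<lambda>s. cyc_config (rotate s P)) (pmf_of_set {..<length P})"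
    unfolding nu_path_def cyc_config_rotate[OF assms] ..
  then have "measure_pmf.prob (nu_path P) A =
      measure_pmf.prob (pmf_of_set {..<length P}) ((\<lambda>s. cyc_config (rotate s P)) -` A)"
    by simp
  also have "\<dots> = card ({..<length P} \<inter> (\<lambda>s. cyc_config (rotate s P)) -` A) / length P"
    using assms by (subst measure_pmf_of_set) auto
  also have "{..<length P} \<inter> (\<lambda>s. cyc_config (rotate s P)) -` A =
      {s \<in> {..<length P}. cyc_config (rotate s P) \<in> A}"
    by auto
  finally show ?thesis .
qed

lemma prob_eq_sum_pmf:
  assumes "set_pmf p \<subseteq> S" "finite S"
  shows "measure_pmf.prob p B = sum (pmf p) (B \<inter> S)"
proof -
  have "measure_pmf.prob p B = measure_pmf.prob p (B \<inter> S)"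
    using measure_Int_set_pmf[of p B] measure_Int_set_pmf[of p "B \<inter> S"] assms(1)
    by (metis inf.absorb_iff2 inf_assoc inf_commute)
  then show ?thesis using assms(2) by (simp add: measure_measure_pmf_finite)
qed

lemma gs_entropy_image:
  assumes "finite T" "inj_on f S" "f ` S \<subseteq> T"
    and "\<And>y. y \<in> T - f ` S \<Longrightarrow> q y = 0" "\<And>x. x \<in> S \<Longrightarrow> q (f x) = p x"
  shows "gs_entropy q T = gs_entropy p S"
proof -
  have "(\<Sum>y\<in>T. q y * ln (q y)) = (\<Sum>y\<in>f ` S. q y * ln (q y))"
    using assms(1,3,4) by (intro sum.mono_neutral_right) auto
  also have "\<dots> = (\<Sum>x\<in>S. p x * ln (p x))"
    using assms(2,5) by (simp add: sum.reindex)
  finally show ?thesis by (simp add: gs_entropy_def)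
qed

lemma funpow_in_bij_betw:
  assumes "bij_betw f S S" "x \<in> S"
  shows "(f ^^ n) x \<in> S"
  using assms by (induction n) (auto simp: bij_betw_def)

lemma self_in_orbit_bij_betw:
  assumes "bij_betw f S S" "finite S" "x \<in> S"
  shows "x \<in> orbit f x"
proof -
  define g where "g y = (if y \<in> S then f y else y)" for y
  have "g permutes S"
    using assms(1) by (intro bij_imp_permutes) (auto simp: g_def cong: bij_betw_cong)
  then have "x \<in> orbit g x"
    using assms(2) by (intro permutation_self_in_orbit) (auto simp: permutation_permutes)
  moreover have "orbit f x = orbit g x"
    using assms(1,3) by (intro orbit_cong0[of x S]) (auto simp: g_def bij_betw_def)
  ultimately show ?thesis by simp
qed

lemma orbit_subset_bij_betw:
  assumes "bij_betw f S S" "x \<in> S"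
  shows "orbit f x \<subseteq> S"
  using funpow_in_bij_betw[OF assms] by (auto simp: orbit_altdef)

context
  fixes f :: "'a \<Rightarrow> 'a" and x :: 'a
  assumes self_in: "x \<in> orbit f x"
begin

lemma orbit_of_eq_orbit: "orbit_of f x = orbit f x"
  unfolding orbit_of_def using orbit_altdef_self_in[OF self_in] by simp

lemma card_orbit_eq_funpow_dist1: "card (orbit f x) = funpow_dist1 f x x"
  using orbit_conv_funpow_dist1[OF self_in] inj_on_funpow_dist1[OF self_in]
  by (simp add: card_image)

lemma card_orbit_pos: "0 < card (orbit f x)"
  by (simp add: card_orbit_eq_funpow_dist1)

lemma funpow_card_orbit: "(f ^^ card (orbit f x)) x = x"
  unfolding card_orbit_eq_funpow_dist1 by (rule funpow_dist1_prop[OF self_in])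

lemma funpow_mod_card_orbit: "(f ^^ (n mod card (orbit f x))) x = (f ^^ n) x"
  using funpow_mod_eq[of "card (orbit f x)" f x n] funpow_card_orbit by simp

lemma orbit_eq_if_in_orbit: "y \<in> orbit f x \<Longrightarrow> orbit f y = orbit f x"
  using orbit_cyclic_eq3[OF cyclic_on_singleI[OF self_in refl]] .

lemma orbit_funpow: "orbit f ((f ^^ n) x) = orbit f x"
  by (rule orbit_eq_if_in_orbit[OF funpow_in_orbit[OF self_in]])

lemma orbit_eq_image_funpow: "orbit f x = (\<lambda>n. (f ^^ n) x) ` {..<card (orbit f x)}"
  unfolding card_orbit_eq_funpow_dist1 using orbit_conv_funpow_dist1[OF self_in]
  by (simp add: atLeast0LessThan)

lemma inj_on_funpow_orbit: "inj_on (\<lambda>n. (f ^^ n) x) {..<card (orbit f x)}"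
  using inj_on_funpow_dist1[OF self_in] by (simp add: card_orbit_eq_funpow_dist1 atLeast0LessThan)

lemma orbit_path_eq: "orbit_path f x = map (\<lambda>n. (f ^^ n) x) [0..<card (orbit f x)]"
  by (simp add: orbit_path_def orbit_of_eq_orbit)

lemma orbit_path_funpow: "orbit_path f ((f ^^ s) x) = rotate s (orbit_path f x)"
proof -
  have self_in': "(f ^^ s) x \<in> orbit f ((f ^^ s) x)"
    using funpow_in_orbit[OF self_in] by (simp add: orbit_funpow)
  let ?p = "card (orbit f x)"
  have "orbit_path f ((f ^^ s) x) = map (\<lambda>n. (f ^^ n) ((f ^^ s) x)) [0..<?p]"
    unfolding orbit_path_def orbit_of_def orbit_altdef_self_in[OF self_in', symmetric] orbit_funpow ..
  also have "\<dots> = rotate s (orbit_path f x)"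
  proof (rule nth_equalityI)
    fix m assume "m < length (map (\<lambda>n. (f ^^ n) ((f ^^ s) x)) [0..<?p])"
    then have "m < ?p" by simp
    then show "map (\<lambda>n. (f ^^ n) ((f ^^ s) x)) [0..<?p] ! m = rotate s (orbit_path f x) ! m"
      using card_orbit_pos
      by (simp add: orbit_path_eq nth_rotate funpow_mod_card_orbit funpow_add add.commute)
  qed (simp add: orbit_path_eq)
  finally show ?thesis .
qed

end

lemma sum_orbits_bij_betw:
  assumes "bij_betw f S S" "finite S"
  shows "sum g S = (\<Sum>P\<in>orbit f ` S. sum g P)"
proof -
  have union: "\<Union> (orbit f ` S) = S"
    using self_in_orbit_bij_betw[OF assms] orbit_subset_bij_betw[OF assms(1)] by blast
  have eq: "P = Q"
    if PQ: "P \<in> orbit f ` S" "Q \<in> orbit f ` S" and z: "z \<in> P" "z \<in> Q" for P Q z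
  proof -
    obtain x y where "x \<in> S" "P = orbit f x" "y \<in> S" "Q = orbit f y"
      using PQ by blast
    then show "P = Q"
      using z orbit_eq_if_in_orbit self_in_orbit_bij_betw[OF assms] by metis
  qed
  have disj: "\<forall>P\<in>orbit f ` S. \<forall>Q\<in>orbit f ` S. P \<noteq> Q \<longrightarrow> P \<inter> Q = {}"
    using eq by auto
  have fin: "\<forall>P\<in>orbit f ` S. finite P"
    using orbit_subset_bij_betw[OF assms(1)] assms(2) finite_subset by blast
  show ?thesis
    using sum.Union_disjoint[OF fin disj, of g] by (simp add: union)
qed

locale de_bruijn_edge_permutation =
  fixes k :: nat and \<mu>k :: "bool list pmf" and \<phi> :: "bool list \<Rightarrow> bool list"
  assumes set_pmf_subset: "set_pmf \<mu>k \<subseteq> bin_strings (Suc k)"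
    and bij: "bij_betw \<phi> (bin_strings (Suc k)) (bin_strings (Suc k))"
    and pmf_\<phi>: "\<And>\<eta>. \<eta> \<in> bin_strings (Suc k) \<Longrightarrow> pmf \<mu>k (\<phi> \<eta>) = pmf \<mu>k \<eta>"
    and \<phi>_follows_edge: "\<And>\<xi>. \<xi> \<in> bin_strings k \<Longrightarrow> \<phi> ` {False # \<xi>, True # \<xi>} = {\<xi> @ [False], \<xi> @ [True]}"
begin

abbreviation edges :: "bool list set" where
  "edges \<equiv> bin_strings (Suc k)"

lemma funpow_\<phi>_in_edges: "\<eta> \<in> edges \<Longrightarrow> (\<phi> ^^ n) \<eta> \<in> edges"
  by (rule funpow_in_bij_betw[OF bij])

lemma self_in_orbit_\<phi>: "\<eta> \<in> edges \<Longrightarrow> \<eta> \<in> orbit \<phi> \<eta>"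
  by (rule self_in_orbit_bij_betw[OF bij finite_bin_strings])

lemma nth_\<phi>:
  assumes "\<eta> \<in> edges" "i < k"
  shows "\<phi> \<eta> ! i = \<eta> ! Suc i"
proof -
  obtain a \<xi> where \<eta>: "\<eta> = a # \<xi>" and \<xi>: "\<xi> \<in> bin_strings k"
    using assms(1) by (cases \<eta>) (auto simp: bin_strings_def)
  have "\<phi> \<eta> \<in> {\<xi> @ [False], \<xi> @ [True]}"
    using \<phi>_follows_edge[OF \<xi>] \<eta> by (cases a) auto
  then show ?thesis
    using assms(2) \<xi> \<eta> by (auto simp: bin_strings_def nth_append)
qed

lemma nth_funpow_\<phi>: "\<eta> \<in> edges \<Longrightarrow> i + n \<le> k \<Longrightarrow> (\<phi> ^^ n) \<eta> ! i = \<eta> ! (i + n)"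
proof (induction n arbitrary: i)
  case (Suc n)
  have "(\<phi> ^^ Suc n) \<eta> ! i = (\<phi> ^^ n) \<eta> ! Suc i"
    using Suc.prems by (simp add: nth_\<phi> funpow_\<phi>_in_edges)
  also have "\<dots> = \<eta> ! (i + Suc n)"
    using Suc by simp
  finally show ?case .
qed simp

lemma hd_funpow_\<phi>:
  assumes "\<eta> \<in> edges" "n \<le> k"
  shows "hd ((\<phi> ^^ n) \<eta>) = \<eta> ! n"
proof -
  have "length ((\<phi> ^^ n) \<eta>) = Suc k"
    using funpow_\<phi>_in_edges[OF assms(1)] by (simp add: bin_strings_def)
  then have "(\<phi> ^^ n) \<eta> \<noteq> []" by auto
  then show ?thesis
    using nth_funpow_\<phi>[OF assms(1), of 0 n] assms(2) by (simp add: hd_conv_nth)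
qed

lemma pmf_funpow_\<phi>: "\<eta> \<in> edges \<Longrightarrow> pmf \<mu>k ((\<phi> ^^ n) \<eta>) = pmf \<mu>k \<eta>"
  by (induction n) (simp_all add: pmf_\<phi> funpow_\<phi>_in_edges)

lemma map_pmf_\<phi>: "map_pmf \<phi> \<mu>k = \<mu>k"
proof (rule pmf_eqI)
  fix \<eta>
  show "pmf (map_pmf \<phi> \<mu>k) \<eta> = pmf \<mu>k \<eta>"
  proof (cases "\<eta> \<in> edges")
    case True
    then obtain \<zeta> where \<zeta>: "\<zeta> \<in> edges" "\<phi> \<zeta> = \<eta>"
      using bij unfolding bij_betw_def by (metis imageE)
    have "pmf (map_pmf \<phi> \<mu>k) \<eta> = measure_pmf.prob \<mu>k (\<phi> -` {\<eta>})"
      by (simp add: pmf_map)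
    also have "\<dots> = sum (pmf \<mu>k) (\<phi> -` {\<eta>} \<inter> edges)"
      by (rule prob_eq_sum_pmf[OF set_pmf_subset finite_bin_strings])
    also have "\<phi> -` {\<eta>} \<inter> edges = {\<zeta>}"
      using \<zeta> bij by (auto simp: bij_betw_def inj_on_def)
    finally show ?thesis using \<zeta> pmf_\<phi>[OF \<zeta>(1)] by simp
  next
    case False
    then have "\<eta> \<notin> set_pmf (map_pmf \<phi> \<mu>k)" "\<eta> \<notin> set_pmf \<mu>k"
      using set_pmf_subset bij by (auto simp: bij_betw_def)
    then show ?thesis by (simp add: set_pmf_eq)
  qed
qed

definition config :: "bool list \<Rightarrow> int \<Rightarrow> bool" where
  "config \<eta> = cyc_config (orbit_path \<phi> \<eta>)"

lemma orbit_path_\<phi>_nonempty: "\<eta> \<in> edges \<Longrightarrow> orbit_path \<phi> \<eta> \<noteq> []"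
  using card_orbit_pos[OF self_in_orbit_\<phi>] by (simp add: orbit_path_eq[OF self_in_orbit_\<phi>])

lemma config_nat:
  assumes "\<eta> \<in> edges"
  shows "config \<eta> (int n) = hd ((\<phi> ^^ n) \<eta>)"
  using card_orbit_pos[OF self_in_orbit_\<phi>[OF assms]]
  by (simp add: config_def cyc_config_nat orbit_path_\<phi>_nonempty[OF assms]
      orbit_path_eq[OF self_in_orbit_\<phi>[OF assms]] funpow_mod_card_orbit[OF self_in_orbit_\<phi>[OF assms]])

lemma config_funpow:
  assumes "\<eta> \<in> edges"
  shows "config ((\<phi> ^^ s) \<eta>) i = config \<eta> (i + int s)"
  unfolding config_def orbit_path_funpow[OF self_in_orbit_\<phi>[OF assms]]
  by (rule cyc_config_rotate[OF orbit_path_\<phi>_nonempty[OF assms]])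

lemma shift_config: "\<eta> \<in> edges \<Longrightarrow> (\<lambda>i. config \<eta> (i + 1)) = config (\<phi> \<eta>)"
  using config_funpow[of \<eta> 1] by auto

lemma map_config_upto_k:
  assumes "\<eta> \<in> edges"
  shows "map (config \<eta>) [0..int k] = \<eta>"
proof -
  have "map (config \<eta>) [0..int k] = map (\<lambda>n. \<eta> ! n) [0..<Suc k]"
    by (simp add: upto_0_int_eq_map_upt config_nat[OF assms] hd_funpow_\<phi>[OF assms])
  also have "\<dots> = \<eta>"
    using assms map_nth[of \<eta>] by (simp add: bin_strings_def del: upt_Suc)
  finally show ?thesis .
qed

lemma inj_on_window_config:
  assumes "k \<le> j"
  shows "inj_on (\<lambda>\<eta>. map (config \<eta>) [0..int j]) edges"
proof (rule inj_onI)
  fix \<eta> \<zeta> assume "\<eta> \<in> edges" "\<zeta> \<in> edges" "map (config \<eta>) [0..int j] = map (config \<zeta>) [0..int j]"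
  moreover have "take (Suc k) (map x [0..int j]) = map x [0..int k]" for x :: "int \<Rightarrow> bool"
    using assms by (simp add: upto_0_int_eq_map_upt take_map min_def del: upt_Suc)
  ultimately show "\<eta> = \<zeta>"
    by (metis map_config_upto_k)
qed

definition extension :: "(int \<Rightarrow> bool) measure" where
  "extension = distr (measure_pmf \<mu>k) Mz config"

lemma sets_extension [simp]: "sets extension = sets Mz"
  by (simp add: extension_def)

lemma prob_space_extension: "prob_space extension"
  unfolding extension_def by (rule prob_space.prob_space_distr) (simp_all add: prob_space_measure_pmf)

lemma measure_extension:
  assumes "A \<in> sets Mz"
  shows "measure extension A = (\<Sum>\<eta>\<in>edges. if config \<eta> \<in> A then pmf \<mu>k \<eta> else 0)"
proof -
  have "measure extension A = measure_pmf.prob \<mu>k (config -` A)"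
    using assms by (simp add: extension_def measure_distr)
  also have "\<dots> = sum (pmf \<mu>k) (config -` A \<inter> edges)"
    by (rule prob_eq_sum_pmf[OF set_pmf_subset finite_bin_strings])
  also have "\<dots> = (\<Sum>\<eta>\<in>edges. if config \<eta> \<in> A then pmf \<mu>k \<eta> else 0)"
    by (simp add: sum.inter_filter[symmetric] Int_def conj_commute)
  finally show ?thesis .
qed

lemma ti_measure_extension: "ti_measure extension"
  unfolding ti_measure_def
proof (intro conjI prob_space_extension sets_extension)
  let ?shift = "\<lambda>x i. x (i + 1)"
  have "distr extension Mz ?shift = distr (measure_pmf \<mu>k) Mz (?shift \<circ> config)"
    unfolding extension_def using shift_measurable by (simp add: distr_distr)
  also have "\<dots> = distr (measure_pmf \<mu>k) Mz (config \<circ> \<phi>)"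
    using set_pmf_subset shift_config
    by (intro distr_cong_AE) (auto simp: AE_measure_pmf_iff)
  also have "\<dots> = distr (distr (measure_pmf \<mu>k) (count_space UNIV) \<phi>) Mz config"
    by (simp add: distr_distr)
  also have "\<dots> = extension"
    by (simp add: extension_def map_pmf_rep_eq[symmetric] map_pmf_\<phi>)
  finally show "distr extension Mz ?shift = extension" .
qed

lemma marginal_prob_extension:
  "marginal_prob extension j ys = (\<Sum>\<eta>\<in>edges. if map (config \<eta>) [0..int j] = ys then pmf \<mu>k \<eta> else 0)"
  using measure_extension[OF sets_Mz_map_eq]
  by (simp add: marginal_prob_def extension_def)

lemma marginal_prob_extension_window:
  assumes "k \<le> j" "\<eta> \<in> edges"
  shows "marginal_prob extension j (map (config \<eta>) [0..int j]) = pmf \<mu>k \<eta>"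
proof -
  have "marginal_prob extension j (map (config \<eta>) [0..int j]) = (\<Sum>\<zeta>\<in>edges. if \<zeta> = \<eta> then pmf \<mu>k \<zeta> else 0)"
    unfolding marginal_prob_extension
    using inj_on_window_config[OF assms(1)] assms(2) by (intro sum.cong) (auto simp: inj_on_def)
  then show ?thesis using assms(2) by simp
qed

lemma extends_extension: "extends extension k \<mu>k"
  unfolding extends_def using marginal_prob_extension_window[of k] by (simp add: map_config_upto_k)

lemma gs_entropy_marginal_extension:
  assumes "k \<le> j"
  shows "gs_entropy (marginal_prob extension j) (bin_strings (Suc j)) = gs_entropy (pmf \<mu>k) edges"
proof (rule gs_entropy_image[OF finite_bin_strings inj_on_window_config[OF assms]])
  show "(\<lambda>\<eta>. map (config \<eta>) [0..int j]) ` edges \<subseteq> bin_strings (Suc j)"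
    by (auto simp: bin_strings_def upto_0_int_eq_map_upt)
  show "marginal_prob extension j ys = 0"
    if "ys \<in> bin_strings (Suc j) - (\<lambda>\<eta>. map (config \<eta>) [0..int j]) ` edges" for ys
    using that unfolding marginal_prob_extension by (intro sum.neutral) auto
qed (rule marginal_prob_extension_window[OF assms])

lemma total_entropy_extension: "total_entropy extension = ereal (gs_entropy (pmf \<mu>k) edges)"
  unfolding total_entropy_def
  by (rule limI, rule tendsto_eventually, rule eventually_sequentiallyI[of k])
     (simp add: gs_entropy_marginal_extension)

lemma total_entropy_extension_minimal:
  assumes "ti_measure \<mu>" "extends \<mu> k \<mu>k"
  shows "total_entropy extension \<le> total_entropy \<mu>"
proof -
  have "gs_entropy (marginal_prob \<mu> k) edges = gs_entropy (pmf \<mu>k) edges"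
    using assms(2) unfolding extends_def gs_entropy_def by (simp cong: sum.cong)
  then show ?thesis
    using gs_entropy_marginal_le_total_entropy[of \<mu> k] assms(1)
    by (simp add: total_entropy_extension ti_measure_def)
qed

lemma sum_orbit_config:
  assumes "r \<in> edges"
  shows "(\<Sum>\<eta>\<in>orbit \<phi> r. if config \<eta> \<in> A then pmf \<mu>k \<eta> else 0) =
    pmf \<mu>k r * card (orbit \<phi> r) * measure_pmf.prob (nu_path (orbit_path \<phi> r)) A"
proof -
  have self_in: "r \<in> orbit \<phi> r" by (rule self_in_orbit_\<phi>[OF assms])
  let ?p = "card (orbit \<phi> r)"
  let ?X = "{s \<in> {..<?p}. config ((\<phi> ^^ s) r) \<in> A}"
  have "(\<Sum>\<eta>\<in>orbit \<phi> r. if config \<eta> \<in> A then pmf \<mu>k \<eta> else 0) =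
      (\<Sum>s<?p. if config ((\<phi> ^^ s) r) \<in> A then pmf \<mu>k r else 0)"
    by (subst orbit_eq_image_funpow[OF self_in], subst sum.reindex[OF inj_on_funpow_orbit[OF self_in]])
       (simp add: pmf_funpow_\<phi>[OF assms] cong: if_cong)
  also have "\<dots> = card ?X * pmf \<mu>k r"
    by (simp add: sum.inter_filter[symmetric])
  finally have sum_eq: "(\<Sum>\<eta>\<in>orbit \<phi> r. if config \<eta> \<in> A then pmf \<mu>k \<eta> else 0) = card ?X * pmf \<mu>k r" .
  let ?P = "orbit_path \<phi> r"
  have len: "length ?P = ?p"
    by (simp add: orbit_path_eq[OF self_in])
  have "?X = {s \<in> {..<length ?P}. cyc_config (rotate s ?P) \<in> A}"
    unfolding len by (simp add: config_def orbit_path_funpow[OF self_in])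
  then have "measure_pmf.prob (nu_path ?P) A = card ?X / ?p"
    using prob_nu_path[OF orbit_path_\<phi>_nonempty[OF assms]] by (simp only: len)
  then show ?thesis
    using sum_eq card_orbit_pos[OF self_in] by simp
qed

lemma measure_extension_orbit_decomposition:
  assumes "A \<in> sets Mz"
  shows "measure extension A =
    (\<Sum>P\<in>orbit_of \<phi> ` edges. pmf \<mu>k (SOME \<eta>. \<eta> \<in> P) * real (card P) *
       measure_pmf.prob (nu_path (orbit_path \<phi> (SOME \<eta>. \<eta> \<in> P))) A)"
proof -
  have orbits: "orbit_of \<phi> ` edges = orbit \<phi> ` edges"
    using orbit_of_eq_orbit[OF self_in_orbit_\<phi>] by (rule image_cong[OF refl])
  have "(\<Sum>\<eta>\<in>P. if config \<eta> \<in> A then pmf \<mu>k \<eta> else 0) =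
      pmf \<mu>k (SOME \<eta>. \<eta> \<in> P) * real (card P) *
      measure_pmf.prob (nu_path (orbit_path \<phi> (SOME \<eta>. \<eta> \<in> P))) A"
    if P: "P \<in> orbit \<phi> ` edges" for P
  proof -
    obtain r where r: "r \<in> edges" "P = orbit \<phi> r" using P by blast
    define r' where "r' = (SOME \<eta>. \<eta> \<in> P)"
    have "r \<in> P" using r self_in_orbit_\<phi> by simp
    then have "r' \<in> P" unfolding r'_def by (rule someI)
    then have "r' \<in> edges" "orbit \<phi> r' = P"
      using r orbit_subset_bij_betw[OF bij] orbit_eq_if_in_orbit[OF self_in_orbit_\<phi>[OF r(1)]]
      by blast+
    then show ?thesis
      unfolding r'_def[symmetric] using sum_orbit_config[of r' A] by simp
  qed
  then show ?thesis
    unfolding measure_extension[OF assms] sum_orbits_bij_betw[OF bij finite_bin_strings] orbits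
    by (rule sum.cong[OF refl])
qed

end

theorem mainTheorem9:
  fixes k :: nat and \<mu>k :: "bool list pmf" and \<phi> :: "bool list \<Rightarrow> bool list"
  assumes "k \<ge> 1"
    and "set_pmf \<mu>k \<subseteq> bin_strings (Suc k)"
    and "LTI k \<mu>k"
    and "bij_betw \<phi> (bin_strings (Suc k)) (bin_strings (Suc k))"
    and "\<forall>\<eta>\<in>bin_strings (Suc k). pmf \<mu>k (\<phi> \<eta>) = pmf \<mu>k \<eta>"
    and "\<forall>\<xi>\<in>bin_strings k. \<phi> ` {False # \<xi>, True # \<xi>} = {\<xi> @ [False], \<xi> @ [True]}"
  shows "\<exists>\<mu>. ti_measure \<mu> \<and> extends \<mu> k \<mu>k
    \<and> total_entropy \<mu> = ereal (gs_entropy (pmf \<mu>k) (bin_strings (Suc k)))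
    \<and> (\<forall>\<mu>'. ti_measure \<mu>' \<and> extends \<mu>' k \<mu>k \<longrightarrow> total_entropy \<mu> \<le> total_entropy \<mu>')
    \<and> (\<forall>A\<in>sets Mz. measure \<mu> A =
         (\<Sum>P\<in>orbit_of \<phi> ` bin_strings (Suc k).
            pmf \<mu>k (SOME \<eta>. \<eta> \<in> P) * real (card P) *
            measure_pmf.prob (nu_path (orbit_path \<phi> (SOME \<eta>. \<eta> \<in> P))) A))"
proof -
  interpret de_bruijn_edge_permutation k \<mu>k \<phi>
    using assms(2,4-6) by unfold_locales auto
  show ?thesis
    using ti_measure_extension extends_extension total_entropy_extension
      total_entropy_extension_minimal measure_extension_orbit_decomposition
    by blast
qed

end
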